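(* Let $q$ be a positive integer and let $\mathcal{D}_1,\mathcal{D}_2$ be nonempty finite subsets of $[q]\times 2^{[q]}$ such that every $(b,B)\in\mathcal{D}_1\cup\mathcal{D}_2$ has $|B|\ge 2$. Then the following are equivalent: (1) $\mathcal{E}_{\mathcal{D}_1}=\mathcal{E}_{\mathcal{D}_2}$; (2) ${\sf Div}(\mathcal{E}_{\mathcal{D}_1})={\sf Div}(\mathcal{E}_{\mathcal{D}_2})$; (3) $\overline{\mathcal{D}_1}=\overline{\mathcal{D}_2}$; (4) $\min(\overline{\mathcal{D}_1})=\min(\overline{\mathcal{D}_2})$.
   Context: Divisibility relations. Let $\Lambda$ be a finite nonempty set and $U=\{u_i:i\in\Lambda\}$ a set of monomials in a polynomial ring over a field, indexed so that $u_i=u_j$ implies $i=j$. A divisibility relation on $U$ is a pair $(b,B)$ with $b\in\Lambda$ and $\emptyset\ne B\subseteq\Lambda$ such that $u_b\mid \mathrm{lcm}(u_i: i\in B)$; ${\sf Div}(U)$ is the set of all of them. A pair $(b,B)$ is trivial if $b\in B$. $(b,B)^{\sf ex}=\{(b,C): B\subseteq C\subseteq \Lambda\}$. $(b,B)\circ(c,C)=(b,(B\smallsetminus\{c\})\cup C)$. For $\mathcal{D}\subseteq\Lambda\times 2^\Lambda$: $\mathcal{D}^\circ$ is the set of all compositions $(b_1,B_1)\circ\cdots\circ(b_s,B_s)$ with $s\ge1$, $(b_i,B_i)\in\mathcal{D}$, with every possible bracketing; $\mathcal{D}^{\sf ex}=\bigcup_{(b,B)\in\mathcal{D}}(b,B)^{\sf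 ex}$; $\Lambda^{\sf triv}=\{(b,B): b\in B\}$; $\overline{\mathcal{D}}=(\mathcal{D}^\circ)^{\sf ex}\cup\Lambda^{\sf triv}$. $\min(\mathcal{D})$ is the set of nontrivial $(b,B)\in\mathcal{D}$ such that no $(b,C)\in\mathcal{D}$ has $C\subsetneq B$. Here $\Lambda=[q]$. $\mathcal{D}$-extremal ideals. Let $\mathsf k$ be a field and $S_{[q]}=\mathsf k[y_A:\emptyset\ne A\subseteq[q]]$. For $\mathcal{D}\subseteq [q]\times(2^{[q]}\smallsetminus\{\emptyset\})$ let $Q(\mathcal{D})=\{A\subseteq[q]: A\ne\emptyset,\ A\cap B\ne\emptyset \text{ for all }(b,B)\in\mathcal{D}\text{ with } b\in A\}$, $\varepsilon_{\mathcal{D},i}=\prod_{A\in Q(\mathcal{D}),\, i\in A} y_A$, and $\mathcal{E}_{\mathcal{D}}=(\varepsilon_{\mathcal{D},1},\ldots,\varepsilon_{\mathcal{D},q})\subseteq S_{[q]}$. ${\sf Div}(\mathcal{E}_{\mathcal{D}})$ denotes ${\sf Div}(\{\varepsilon_{\mathcal{D},1},\ldots,\varepsilon_{\mathcal{D},q}\})$ with indexing set $[q]$. *)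

theory Defs
  imports Main "HOL-Library.Poly_Mapping"
begin

type_synonym rel = "nat \<times> nat set"

text \<open>A monomial in the variables of type 'v is represented by its exponent
vector  exponent vector.\<close>

definition mono_dvd :: "('v \<Rightarrow>\<^sub>0 nat) \<Rightarrow> ('v \<Rightarrow>\<^sub>0 nat) \<Rightarrow> bool" where
  "mono_dvd u w \<longleftrightarrow> (\<forall>v. Poly_Mapping.lookup u v \<le> Poly_Mapping.lookup w v)"

definition mono_lcm :: "('i \<Rightarrow> ('v \<Rightarrow>\<^sub>0 nat)) \<Rightarrow> 'i set \<Rightarrow> ('v \<Rightarrow>\<^sub>0 nat)" where
  "mono_lcm u B = Abs_poly_mapping (\<lambda>v. Max ((\<lambda>i. Poly_Mapping.lookup (u i) v) ` B))"

definition Div :: "'i set \<Rightarrow> ('i \<Rightarrow> ('v \<Rightarrow>\<^sub>0 nat)) \<Rightarrow> ('i \<times> 'i set) set" where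
  "Div \<Lambda> u = {(b, B). b \<in> \<Lambda> \<and> B \<noteq> {} \<and> B \<subseteq> \<Lambda> \<and> mono_dvd (u b) (mono_lcm u B)}"

definition comp :: "'i \<times> 'i set \<Rightarrow> 'i \<times> 'i set \<Rightarrow> 'i \<times> 'i set" where
  "comp x y = (fst x, (snd x - {fst y}) \<union> snd y)"

inductive_set comp_closure :: "('i \<times> 'i set) set \<Rightarrow> ('i \<times> 'i set) set"
  for D where
  base: "x \<in> D \<Longrightarrow> x \<in> comp_closure D"
| step: "x \<in> comp_closure D \<Longrightarrow> y \<in> comp_closure D \<Longrightarrow> comp x y \<in> comp_closure D"

definition ext :: "'i set \<Rightarrow> ('i \<times> 'i set) set \<Rightarrow> ('i \<times> 'i set) set" where
  "ext \<Lambda> D = {(b, C). \<exists>B. (b, B) \<in> D \<and> B \<subseteq> C \<and> C \<subseteq> \<Lambda>}"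

definition triv :: "'i set \<Rightarrow> ('i \<times> 'i set) set" where
  "triv \<Lambda> = {(b, B). b \<in> B \<and> B \<subseteq> \<Lambda>}"

definition closure_rel :: "'i set \<Rightarrow> ('i \<times> 'i set) set \<Rightarrow> ('i \<times> 'i set) set" where
  "closure_rel \<Lambda> D = ext \<Lambda> (comp_closure D) \<union> triv \<Lambda>"

definition min_rel :: "('i \<times> 'i set) set \<Rightarrow> ('i \<times> 'i set) set" where
  "min_rel D = {(b, B). (b, B) \<in> D \<and> b \<notin> B \<and> \<not> (\<exists>C. (b, C) \<in> D \<and> C \<subset> B)}"

text \<open>Variables y_A are indexed by A :: nat set; S_[q] uses those with A nonempty, A \<subseteq> [q].\<close>

definition vars :: "nat \<Rightarrow> nat set set" where
  "vars q = {A. A \<noteq> {} \<and> A \<subseteq> {1..q}}"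

type_synonym 'k mpoly = "(nat set \<Rightarrow>\<^sub>0 nat) \<Rightarrow>\<^sub>0 'k"

definition yvar :: "nat set \<Rightarrow> 'k::field mpoly" where
  "yvar A = Poly_Mapping.single (Poly_Mapping.single A 1) 1"

definition S_ring :: "nat \<Rightarrow> 'k::field mpoly set" where
  "S_ring q = {p. \<forall>m \<in> Poly_Mapping.keys p. Poly_Mapping.keys m \<subseteq> vars q}"

definition ideal_gen :: "'a::comm_ring_1 set \<Rightarrow> 'a set \<Rightarrow> 'a set" where
  "ideal_gen R G = {x. \<exists>F f. finite F \<and> F \<subseteq> G \<and> (\<forall>g\<in>F. f g \<in> R) \<and> x = (\<Sum>g\<in>F. f g * g)}"

definition Qset :: "nat \<Rightarrow> rel set \<Rightarrow> nat set set" where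
  "Qset q D = {A. A \<subseteq> {1..q} \<and> A \<noteq> {} \<and> (\<forall>(b, B) \<in> D. b \<in> A \<longrightarrow> A \<inter> B \<noteq> {})}"

definition eps_exp :: "nat \<Rightarrow> rel set \<Rightarrow> nat \<Rightarrow> (nat set \<Rightarrow>\<^sub>0 nat)" where
  "eps_exp q D i = (\<Sum>A \<in> {A \<in> Qset q D. i \<in> A}. Poly_Mapping.single A 1)"

definition eps :: "nat \<Rightarrow> rel set \<Rightarrow> nat \<Rightarrow> 'k::field mpoly" where
  "eps q D i = (\<Prod>A \<in> {A \<in> Qset q D. i \<in> A}. yvar A)"

definition E_ideal :: "nat \<Rightarrow> rel set \<Rightarrow> 'k::field mpoly set" where
  "E_ideal q D = ideal_gen (S_ring q) (eps q D ` {1..q})"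

end

theory Submission
  imports Defs
begin

(* All four conditions are equivalent to Q(D1) = Q(D2). Say that A respects (b,B) if A meets B
   whenever b \<in> A. Then Q(D) is the family of nonempty sets respecting D, and the relations
   respected by all members of a family form the other half of a Galois connection; write P(Q(D))
   for them. Div(E_D) = P(Q(D)), since the generators are squarefree monomials and divisibility
   by an lcm of them is inclusion of supports in a union. The closure of D is P(Q(D)) as well:
   composition preserves respected relations, and if b is not derivable from B, then the set of
   elements neither in B nor derivable from B respects D but not (b,B). Since D \<subseteq> P(Q(D)), the
   Galois connection recovers Q(D) from P(Q(D)). For the ideals, |B| \<ge> 2 makes the supports of
   the generators an antichain, so equal monomial ideals have the same generators. Finally, an
   upward closed set of relations containing the trivial ones is generated by its minimal
   elements. *)

definition respecting_sets :: "'i set \<Rightarrow> ('i \<times> 'i set) set \<Rightarrow> 'i set set" where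
  "respecting_sets \<Lambda> D = {A. A \<subseteq> \<Lambda> \<and> A \<noteq> {} \<and> (\<forall>(b, B) \<in> D. b \<in> A \<longrightarrow> A \<inter> B \<noteq> {})}"

definition respected_rels :: "'i set \<Rightarrow> 'i set set \<Rightarrow> ('i \<times> 'i set) set" where
  "respected_rels \<Lambda> \<Q> =
     {(b, B). b \<in> \<Lambda> \<and> B \<noteq> {} \<and> B \<subseteq> \<Lambda> \<and> (\<forall>A \<in> \<Q>. b \<in> A \<longrightarrow> A \<inter> B \<noteq> {})}"

lemma Qset_eq_respecting_sets: "Qset q D = respecting_sets {1..q} D"
  unfolding Qset_def respecting_sets_def by blast

lemma subset_respected_rels_respecting_sets:
  assumes "D \<subseteq> \<Lambda> \<times> (Pow \<Lambda> - {{}})"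
  shows "D \<subseteq> respected_rels \<Lambda> (respecting_sets \<Lambda> D)"
  using assms unfolding respected_rels_def respecting_sets_def by blast

lemma respecting_sets_respected_rels:
  assumes "D \<subseteq> \<Lambda> \<times> (Pow \<Lambda> - {{}})"
  shows "respecting_sets \<Lambda> (respected_rels \<Lambda> (respecting_sets \<Lambda> D)) = respecting_sets \<Lambda> D"
proof
  show "respecting_sets \<Lambda> (respected_rels \<Lambda> (respecting_sets \<Lambda> D)) \<subseteq> respecting_sets \<Lambda> D"
    using subset_respected_rels_respecting_sets[OF assms] unfolding respecting_sets_def by blast
  show "respecting_sets \<Lambda> D \<subseteq> respecting_sets \<Lambda> (respected_rels \<Lambda> (respecting_sets \<Lambda> D))"
    unfolding respecting_sets_def respected_rels_def by blast
qed

lemma respected_rels_eq_iff: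
  assumes "D1 \<subseteq> \<Lambda> \<times> (Pow \<Lambda> - {{}})" "D2 \<subseteq> \<Lambda> \<times> (Pow \<Lambda> - {{}})"
  shows "respected_rels \<Lambda> (respecting_sets \<Lambda> D1) = respected_rels \<Lambda> (respecting_sets \<Lambda> D2)
           \<longleftrightarrow> respecting_sets \<Lambda> D1 = respecting_sets \<Lambda> D2"
  by (metis assms respecting_sets_respected_rels)

lemma comp_mem_respected_rels:
  assumes "x \<in> respected_rels \<Lambda> \<Q>" "y \<in> respected_rels \<Lambda> \<Q>"
  shows "comp x y \<in> respected_rels \<Lambda> \<Q>"
proof -
  obtain b B c C where xy: "x = (b, B)" "y = (c, C)" by force
  have "A \<inter> (B - {c} \<union> C) \<noteq> {}" if "A \<in> \<Q>" "b \<in> A" for A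
  proof (cases "A \<inter> B \<subseteq> {c}")
    case True
    with assms xy that have "c \<in> A" unfolding respected_rels_def by blast
    with assms xy that show ?thesis unfolding respected_rels_def by blast
  next
    case False
    then show ?thesis by blast
  qed
  with assms show ?thesis unfolding xy comp_def respected_rels_def by auto
qed

lemma comp_closure_subset_respected_rels:
  assumes "D \<subseteq> respected_rels \<Lambda> \<Q>"
  shows "comp_closure D \<subseteq> respected_rels \<Lambda> \<Q>"
proof
  fix x assume "x \<in> comp_closure D"
  then show "x \<in> respected_rels \<Lambda> \<Q>"
    by induction (use assms comp_mem_respected_rels in blast)+
qed

lemma closure_rel_subset_respected_rels:
  assumes "D \<subseteq> respected_rels \<Lambda> \<Q>"
  shows "closure_rel \<Lambda> D \<subseteq> respected_rels \<Lambda> \<Q>"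
  using comp_closure_subset_respected_rels[OF assms]
  unfolding closure_rel_def ext_def triv_def respected_rels_def by blast

definition derivable_from :: "('i \<times> 'i set) set \<Rightarrow> 'i set \<Rightarrow> 'i set" where
  "derivable_from D B = {x. \<exists>T \<subseteq> B. (x, T) \<in> comp_closure D}"

lemma comp_closure_substitute:
  assumes "finite X" "X \<subseteq> derivable_from D B" "(c, S) \<in> comp_closure D"
  shows "\<exists>S' \<subseteq> S - X \<union> B. (c, S') \<in> comp_closure D"
  using assms(1,2)
proof (induction X rule: finite_induct)
  case empty
  then show ?case using assms(3) by blast
next
  case (insert x X)
  then obtain S' where S': "S' \<subseteq> S - X \<union> B" "(c, S') \<in> comp_closure D" by auto
  obtain T where T: "T \<subseteq> B" "(x, T) \<in> comp_closure D"
    using insert.prems unfolding derivable_from_def by auto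
  show ?case
  proof (cases "x \<in> S'")
    case True
    have "comp (c, S') (x, T) \<in> comp_closure D" using S' T by (intro comp_closure.step)
    then show ?thesis using S' T unfolding comp_def by (intro exI[of _ "S' - {x} \<union> T"]) auto
  next
    case False
    then show ?thesis using S' by auto
  qed
qed

lemma mem_derivable_from:
  assumes "(c, C) \<in> D" "finite C" "C \<subseteq> B \<union> derivable_from D B"
  shows "c \<in> derivable_from D B"
proof -
  have "C - B \<subseteq> derivable_from D B" "(c, C) \<in> comp_closure D"
    using assms(1,3) comp_closure.base by blast+
  with assms(2) obtain S' where "S' \<subseteq> B" "(c, S') \<in> comp_closure D"
    using comp_closure_substitute[of "C - B" D B c C] by auto
  then show ?thesis unfolding derivable_from_def by blast
qed

lemma respected_rels_subset_closure_rel: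
  assumes "finite \<Lambda>" "D \<subseteq> \<Lambda> \<times> Pow \<Lambda>"
  shows "respected_rels \<Lambda> (respecting_sets \<Lambda> D) \<subseteq> closure_rel \<Lambda> D"
proof clarify
  fix b B assume "(b, B) \<in> respected_rels \<Lambda> (respecting_sets \<Lambda> D)"
  then have b: "b \<in> \<Lambda>" "B \<subseteq> \<Lambda>" "\<And>A. A \<in> respecting_sets \<Lambda> D \<Longrightarrow> b \<in> A \<Longrightarrow> A \<inter> B \<noteq> {}"
    unfolding respected_rels_def by auto
  have "b \<in> B \<union> derivable_from D B"
  proof (rule ccontr)
    assume b_underivable: "b \<notin> B \<union> derivable_from D B"
    define A where "A = \<Lambda> - (B \<union> derivable_from D B)"
    have "A \<inter> C \<noteq> {}" if cC: "(c, C) \<in> D" "c \<in> A" for c C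
    proof
      assume "A \<inter> C = {}"
      moreover have "C \<subseteq> \<Lambda>" using assms(2) cC(1) by blast
      ultimately have "C \<subseteq> B \<union> derivable_from D B" "finite C"
        using assms(1) finite_subset unfolding A_def by blast+
      with cC(1) have "c \<in> derivable_from D B" by (simp add: mem_derivable_from)
      with cC(2) show False unfolding A_def by blast
    qed
    moreover have "b \<in> A" "A \<subseteq> \<Lambda>" "A \<inter> B = {}"
      using b(1) b_underivable unfolding A_def by blast+
    ultimately have "A \<in> respecting_sets \<Lambda> D" "b \<in> A" "A \<inter> B = {}"
      unfolding respecting_sets_def by auto
    with b(3) show False by blast
  qed
  then consider "b \<in> B" | T where "T \<subseteq> B" "(b, T) \<in> comp_closure D"
    unfolding derivable_from_def by blast
  then show "(b, B) \<in> closure_rel \<Lambda> D"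
  proof cases
    case 1
    then show ?thesis using b(2) unfolding closure_rel_def triv_def by blast
  next
    case 2
    then show ?thesis using b(2) unfolding closure_rel_def ext_def by blast
  qed
qed

lemma closure_rel_eq_respected_rels:
  assumes "finite \<Lambda>" "D \<subseteq> \<Lambda> \<times> (Pow \<Lambda> - {{}})"
  shows "closure_rel \<Lambda> D = respected_rels \<Lambda> (respecting_sets \<Lambda> D)"
  using assms closure_rel_subset_respected_rels[OF subset_respected_rels_respecting_sets]
    respected_rels_subset_closure_rel by blast

lemma ext_min_rel_union_triv:
  assumes "finite \<Lambda>" "\<forall>(b, B) \<in> X. B \<subseteq> \<Lambda>" "ext \<Lambda> X \<subseteq> X" "triv \<Lambda> \<subseteq> X"
  shows "X = ext \<Lambda> (min_rel X) \<union> triv \<Lambda>"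
proof
  have "ext \<Lambda> (min_rel X) \<subseteq> ext \<Lambda> X" unfolding ext_def min_rel_def by blast
  with assms show "ext \<Lambda> (min_rel X) \<union> triv \<Lambda> \<subseteq> X" by blast
  show "X \<subseteq> ext \<Lambda> (min_rel X) \<union> triv \<Lambda>"
  proof clarify
    fix b C assume bC: "(b, C) \<in> X" and "(b, C) \<notin> triv \<Lambda>"
    with assms have C: "C \<subseteq> \<Lambda>" "b \<notin> C" unfolding triv_def by auto
    let ?below = "{B. B \<subseteq> C \<and> (b, B) \<in> X}"
    have "finite ?below" using assms(1) C by (simp add: finite_subset)
    then obtain B where B: "B \<in> ?below" "\<forall>B' \<in> ?below. B' \<subseteq> B \<longrightarrow> B = B'"
      using finite_has_minimal2[of ?below C] bC by blast
    then have "(b, B) \<in> min_rel X" using C unfolding min_rel_def by blast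
    with B C show "(b, C) \<in> ext \<Lambda> (min_rel X)" unfolding ext_def by blast
  qed
qed

lemma ext_closure_rel_subset: "ext \<Lambda> (closure_rel \<Lambda> D) \<subseteq> closure_rel \<Lambda> D"
  unfolding closure_rel_def ext_def triv_def by blast

lemma closure_rel_eq_iff_min_rel_eq:
  assumes "finite \<Lambda>"
  shows "closure_rel \<Lambda> D1 = closure_rel \<Lambda> D2
           \<longleftrightarrow> min_rel (closure_rel \<Lambda> D1) = min_rel (closure_rel \<Lambda> D2)"
proof -
  have "closure_rel \<Lambda> D = ext \<Lambda> (min_rel (closure_rel \<Lambda> D)) \<union> triv \<Lambda>" for D
  proof (rule ext_min_rel_union_triv[OF assms _ ext_closure_rel_subset])
    show "\<forall>(b, B) \<in> closure_rel \<Lambda> D. B \<subseteq> \<Lambda>" "triv \<Lambda> \<subseteq> closure_rel \<Lambda> D"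
      unfolding closure_rel_def ext_def triv_def by auto
  qed
  then show ?thesis by metis
qed

definition sqfree_mono :: "'v set \<Rightarrow> ('v \<Rightarrow>\<^sub>0 nat)" where
  "sqfree_mono S = (\<Sum>v \<in> S. Poly_Mapping.single v 1)"

lemma lookup_sqfree_mono:
  "finite S \<Longrightarrow> Poly_Mapping.lookup (sqfree_mono S) v = (if v \<in> S then 1 else 0)"
  unfolding sqfree_mono_def lookup_sum lookup_single by (simp add: when_def)

lemma mono_dvd_sqfree_mono_iff:
  "finite S \<Longrightarrow> finite T \<Longrightarrow> mono_dvd (sqfree_mono S) (sqfree_mono T) \<longleftrightarrow> S \<subseteq> T"
  unfolding mono_dvd_def by (auto simp: lookup_sqfree_mono split: if_splits)

lemma mono_lcm_sqfree_mono:
  assumes "finite B" "B \<noteq> {}" "\<forall>i \<in> B. finite (F i)"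
  shows "mono_lcm (\<lambda>i. sqfree_mono (F i)) B = sqfree_mono (\<Union>i \<in> B. F i)"
proof -
  have "Max ((\<lambda>i. Poly_Mapping.lookup (sqfree_mono (F i)) v) ` B)
          = Poly_Mapping.lookup (sqfree_mono (\<Union>i \<in> B. F i)) v" for v
    using assms by (intro Max_eqI) (auto simp: lookup_sqfree_mono)
  then show ?thesis unfolding mono_lcm_def by simp
qed

lemma Div_sqfree_mono:
  assumes "finite \<Lambda>" "\<forall>i \<in> \<Lambda>. finite (F i)"
  shows "Div \<Lambda> (\<lambda>i. sqfree_mono (F i))
           = {(b, B). b \<in> \<Lambda> \<and> B \<noteq> {} \<and> B \<subseteq> \<Lambda> \<and> F b \<subseteq> (\<Union>i \<in> B. F i)}"
proof -
  have "mono_dvd (sqfree_mono (F b)) (mono_lcm (\<lambda>i. sqfree_mono (F i)) B) \<longleftrightarrow> F b \<subseteq> (\<Union>i \<in> B. F i)"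
    if "b \<in> \<Lambda>" "B \<noteq> {}" "B \<subseteq> \<Lambda>" for b B
  proof -
    have "finite B" using assms(1) that(3) finite_subset by blast
    with assms that have "mono_lcm (\<lambda>i. sqfree_mono (F i)) B = sqfree_mono (\<Union>i \<in> B. F i)"
      by (intro mono_lcm_sqfree_mono) auto
    moreover have "finite (\<Union>i \<in> B. F i)" using \<open>finite B\<close> assms that by auto
    ultimately show ?thesis using assms that by (simp add: mono_dvd_sqfree_mono_iff)
  qed
  then show ?thesis unfolding Div_def by auto
qed

definition eps_vars :: "nat \<Rightarrow> rel set \<Rightarrow> nat \<Rightarrow> nat set set" where
  "eps_vars q D i = {A \<in> Qset q D. i \<in> A}"

lemma finite_eps_vars: "finite (eps_vars q D i)"
  by (rule finite_subset[of _ "Pow {1..q}"]) (auto simp: eps_vars_def Qset_def)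

lemma eps_exp_eq_sqfree_mono: "eps_exp q D = (\<lambda>i. sqfree_mono (eps_vars q D i))"
  unfolding eps_exp_def sqfree_mono_def eps_vars_def ..

lemma Div_eps_exp: "Div {1..q} (eps_exp q D) = respected_rels {1..q} (Qset q D)"
  unfolding eps_exp_eq_sqfree_mono
  by (simp add: Div_sqfree_mono finite_eps_vars) (auto simp: respected_rels_def eps_vars_def)

lemma mono_dvd_add_left: "mono_dvd u (t + u)"
  unfolding mono_dvd_def by (simp add: lookup_add)

lemma prod_yvar: "finite S \<Longrightarrow> (\<Prod>A \<in> S. yvar A :: 'k::field mpoly) = Poly_Mapping.single (sqfree_mono S) 1"
  by (induction S rule: finite_induct) (simp_all add: yvar_def sqfree_mono_def mult_single)

lemma eps_eq_single: "(eps q D :: nat \<Rightarrow> 'k::field mpoly) = (\<lambda>i. Poly_Mapping.single (eps_exp q D i) 1)"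
proof
  fix i
  have "(eps q D i :: 'k mpoly) = (\<Prod>A \<in> eps_vars q D i. yvar A)"
    unfolding eps_def eps_vars_def ..
  then show "(eps q D i :: 'k mpoly) = Poly_Mapping.single (eps_exp q D i) 1"
    by (simp add: prod_yvar finite_eps_vars eps_exp_eq_sqfree_mono)
qed

lemma generator_mem_ideal_gen: "g \<in> G \<Longrightarrow> 1 \<in> R \<Longrightarrow> g \<in> ideal_gen R G"
  unfolding ideal_gen_def by (intro CollectI exI[of _ "{g}"] exI[of _ "\<lambda>_. 1"]) simp

lemma one_mem_S_ring: "1 \<in> S_ring q"
  unfolding S_ring_def by simp

lemma eps_mem_E_ideal: "i \<in> {1..q} \<Longrightarrow> eps q D i \<in> E_ideal q D"
  unfolding E_ideal_def by (intro generator_mem_ideal_gen one_mem_S_ring) simp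

lemma keys_ideal_gen_monomials:
  fixes x :: "'m::comm_monoid_add \<Rightarrow>\<^sub>0 'k::comm_ring_1"
  assumes "x \<in> ideal_gen R ((\<lambda>j. Poly_Mapping.single (e j) 1) ` J)" "m \<in> Poly_Mapping.keys x"
  shows "\<exists>j \<in> J. \<exists>t. m = t + e j"
proof -
  obtain F f where F: "F \<subseteq> (\<lambda>j. Poly_Mapping.single (e j) 1) ` J" "x = (\<Sum>g \<in> F. f g * g)"
    using assms(1) unfolding ideal_gen_def by blast
  have "(\<Sum>g \<in> F. Poly_Mapping.lookup (f g * g) m) \<noteq> 0"
    using assms(2) F(2) by (simp add: lookup_sum in_keys_iff)
  then obtain g where g: "g \<in> F" "m \<in> Poly_Mapping.keys (f g * g)"
    by (meson in_keys_iff sum.not_neutral_contains_not_neutral)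
  obtain j where j: "j \<in> J" "g = Poly_Mapping.single (e j) 1" using g(1) F(1) by blast
  from g(2) have "m \<in> {a + b | a b. a \<in> Poly_Mapping.keys (f g) \<and> b \<in> Poly_Mapping.keys g}"
    using keys_mult by blast
  then show ?thesis using j by auto
qed

lemma E_ideal_subset_imp_eps_vars_subset:
  assumes "(E_ideal q D1 :: 'k::field mpoly set) \<subseteq> E_ideal q D2" "i \<in> {1..q}"
  shows "\<exists>j \<in> {1..q}. eps_vars q D2 j \<subseteq> eps_vars q D1 i"
proof -
  have "(eps q D1 i :: 'k mpoly) \<in> E_ideal q D2" using assms eps_mem_E_ideal by blast
  then have "(Poly_Mapping.single (eps_exp q D1 i) 1 :: 'k mpoly)
               \<in> ideal_gen (S_ring q) ((\<lambda>j. Poly_Mapping.single (eps_exp q D2 j) 1) ` {1..q})"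
    by (simp add: E_ideal_def eps_eq_single)
  then obtain j t where "j \<in> {1..q}" "eps_exp q D1 i = t + eps_exp q D2 j"
    using keys_ideal_gen_monomials by fastforce
  then have "mono_dvd (sqfree_mono (eps_vars q D2 j)) (sqfree_mono (eps_vars q D1 i))"
    by (metis mono_dvd_add_left eps_exp_eq_sqfree_mono)
  with \<open>j \<in> {1..q}\<close> show ?thesis by (auto simp: mono_dvd_sqfree_mono_iff finite_eps_vars)
qed

lemma eps_vars_subset_imp_eq:
  assumes "D \<subseteq> {1..q} \<times> Pow {1..q}" "\<forall>(b, B) \<in> D. card B \<ge> 2"
    and "i \<in> {1..q}" "k \<in> {1..q}" "eps_vars q D k \<subseteq> eps_vars q D i"
  shows "k = i"
proof (rule ccontr)
  assume "k \<noteq> i"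
  have "\<not> B \<subseteq> {i}" if "(b, B) \<in> D" for b B
    using assms(2) that card_mono[of "{i}" B] by fastforce
  with assms(1) \<open>k \<noteq> i\<close> assms(4) have "{1..q} - {i} \<in> Qset q D"
    unfolding Qset_def by blast
  then have "{1..q} - {i} \<in> eps_vars q D k - eps_vars q D i"
    using assms(4) \<open>k \<noteq> i\<close> unfolding eps_vars_def by blast
  with assms(5) show False by blast
qed

lemma Qset_subset_if_E_ideal_eq:
  assumes "(E_ideal q D1 :: 'k::field mpoly set) = E_ideal q D2"
    and "D1 \<subseteq> {1..q} \<times> Pow {1..q}" "\<forall>(b, B) \<in> D1. card B \<ge> 2"
  shows "Qset q D1 \<subseteq> Qset q D2"
proof
  fix A assume A: "A \<in> Qset q D1"
  then obtain i where i: "i \<in> A" "i \<in> {1..q}" unfolding Qset_def by blast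
  obtain j where j: "j \<in> {1..q}" "eps_vars q D2 j \<subseteq> eps_vars q D1 i"
    using E_ideal_subset_imp_eps_vars_subset[of q D1 D2 i] assms(1) i(2) by blast
  obtain k where k: "k \<in> {1..q}" "eps_vars q D1 k \<subseteq> eps_vars q D2 j"
    using E_ideal_subset_imp_eps_vars_subset[of q D2 D1 j] assms(1) j(1) by blast
  have "k = i" using eps_vars_subset_imp_eq[OF assms(2,3) i(2) k(1)] j(2) k(2) by blast
  with A i k(2) show "A \<in> Qset q D2" unfolding eps_vars_def by blast
qed

lemma E_ideal_eq_iff_Qset_eq:
  assumes "D1 \<subseteq> {1..q} \<times> Pow {1..q}" "\<forall>(b, B) \<in> D1. card B \<ge> 2"
    and "D2 \<subseteq> {1..q} \<times> Pow {1..q}" "\<forall>(b, B) \<in> D2. card B \<ge> 2"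
  shows "(E_ideal q D1 :: 'k::field mpoly set) = E_ideal q D2 \<longleftrightarrow> Qset q D1 = Qset q D2"
proof
  assume "(E_ideal q D1 :: 'k::field mpoly set) = E_ideal q D2"
  then show "Qset q D1 = Qset q D2"
    using Qset_subset_if_E_ideal_eq[OF _ assms(1,2)] Qset_subset_if_E_ideal_eq[OF _ assms(3,4)]
    by blast
next
  assume "Qset q D1 = Qset q D2"
  then show "(E_ideal q D1 :: 'k::field mpoly set) = E_ideal q D2"
    unfolding E_ideal_def eps_def by simp
qed

theorem theorem3p11:
  fixes q :: nat and D1 D2 :: "rel set"
  assumes "q \<ge> 1"
    and "finite D1" "D1 \<noteq> {}" "D1 \<subseteq> {1..q} \<times> Pow {1..q}"
    and "finite D2" "D2 \<noteq> {}" "D2 \<subseteq> {1..q} \<times> Pow {1..q}"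
    and "\<forall>(b, B) \<in> D1 \<union> D2. card B \<ge> 2"
  shows "((E_ideal q D1 :: 'k::field mpoly set) = E_ideal q D2
            \<longleftrightarrow> Div {1..q} (eps_exp q D1) = Div {1..q} (eps_exp q D2))
       \<and> (Div {1..q} (eps_exp q D1) = Div {1..q} (eps_exp q D2)
            \<longleftrightarrow> closure_rel {1..q} D1 = closure_rel {1..q} D2)
       \<and> (closure_rel {1..q} D1 = closure_rel {1..q} D2
            \<longleftrightarrow> min_rel (closure_rel {1..q} D1) = min_rel (closure_rel {1..q} D2))"
proof -
  have card1: "\<forall>(b, B) \<in> D1. card B \<ge> 2" and card2: "\<forall>(b, B) \<in> D2. card B \<ge> 2"
    using assms(8) by auto
  have "D1 \<subseteq> {1..q} \<times> (Pow {1..q} - {{}})" "D2 \<subseteq> {1..q} \<times> (Pow {1..q} - {{}})"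
    using assms(4,7) card1 card2 by fastforce+
  note respected = respected_rels_eq_iff[OF this]
    closure_rel_eq_respected_rels[OF finite_atLeastAtMost this(1)]
    closure_rel_eq_respected_rels[OF finite_atLeastAtMost this(2)]
  have "(E_ideal q D1 :: 'k::field mpoly set) = E_ideal q D2 \<longleftrightarrow> Qset q D1 = Qset q D2"
    by (rule E_ideal_eq_iff_Qset_eq[OF assms(4) card1 assms(7) card2])
  moreover have "Div {1..q} (eps_exp q D1) = Div {1..q} (eps_exp q D2) \<longleftrightarrow> Qset q D1 = Qset q D2"
    unfolding Div_eps_exp Qset_eq_respecting_sets by (rule respected(1))
  moreover have "closure_rel {1..q} D1 = closure_rel {1..q} D2 \<longleftrightarrow> Qset q D1 = Qset q D2"
    unfolding respected(2,3) Qset_eq_respecting_sets by (rule respected(1))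
  ultimately show ?thesis
    using closure_rel_eq_iff_min_rel_eq[OF finite_atLeastAtMost] by blast
qed

end
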